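(* Let $d\in\mathbb{N}$, and for $a=(a_0,\dots,a_d)\in\mathbb{R}^{d+1}$ and $s\in\mathbb{R}$ let $g(a,s)=a_0+a_1s+\cdots+a_ds^d$. For $m,R>0$ set $K=\{a\in\mathbb{R}^{d+1}: |a_0|+\cdots+|a_d|\geq m\}$ and $I=[-R,R]$. Then there exists $\lambda=\lambda(d,m,R)>0$ such that for each $a\in K$, either there exists $p\in\{1,\dots,d\}$ with $\left|\frac{\partial^p g}{\partial s^p}(a,s)\right|\geq\lambda$ for all $s\in I$, or $|a_0|-\sup_{s\in I}|g(a,s)-a_0|\geq\lambda$. *)

theory Defs
  imports "HOL-Analysis.Analysis"
begin

text \<open>The polynomial g(a,s) = a_0 + a_1 s + ... + a_d s^d; the coefficient vector
  a in R^(d+1) is represented by a function nat => real of which only the values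
  at 0..d are used.\<close>
definition gpoly :: "nat \<Rightarrow> (nat \<Rightarrow> real) \<Rightarrow> real \<Rightarrow> real" where
  "gpoly d a s = (\<Sum>i\<le>d. a i * s ^ i)"

end

theory Submission
  imports Defs
begin

text \<open>On \<open>[-R, R]\<close> the \<open>k\<close>-th derivative of \<open>g(a,\<cdot>)\<close> differs from \<open>k! a\<^sub>k\<close> by at most
  \<open>B (|a\<^sub>k\<^sub>+\<^sub>1| + \<dots> + |a\<^sub>d|)\<close>, where \<open>B = d! max(1,R)\<^sup>d\<close>. Put \<open>\<delta> = 1/(4(d+1)B)\<close> and
  let \<open>k\<close> be the largest index in \<open>1..d\<close> with \<open>|a\<^sub>k| \<ge> m \<delta>\<^sup>k\<close>, or \<open>k = 0\<close> if there is none.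
  All later coefficients satisfy \<open>|a\<^sub>j| < m \<delta>\<^sup>j \<le> m \<delta>\<^sup>k\<^sup>+\<^sup>1\<close>, so the error above is at most
  \<open>m \<delta>\<^sup>k / 4\<close>. For \<open>k > 0\<close> this leaves \<open>|\<partial>\<^sup>k g| \<ge> 3/4 m \<delta>\<^sup>k\<close>; for \<open>k = 0\<close> it gives
  \<open>|a\<^sub>0| \<ge> 3/4 m\<close> and \<open>|g - a\<^sub>0| \<le> m/4\<close>. Hence \<open>\<lambda> = m \<delta>\<^sup>d / 2\<close> works.\<close>

lemma higher_deriv_gpoly:
  "(deriv ^^ p) (gpoly d a) = (\<lambda>s. \<Sum>i=p..d. a i * (fact i / fact (i - p)) * s ^ (i - p))"
proof (induction p)
  case 0
  show ?case by (simp add: gpoly_def atLeast0AtMost)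
next
  case (Suc p)
  show ?case
  proof
    fix s :: real
    let ?c = "\<lambda>i. a i * (fact i / fact (i - p))"
    have "((\<lambda>s. \<Sum>i=p..d. ?c i * s ^ (i - p)) has_real_derivative
            (\<Sum>i=p..d. ?c i * (of_nat (i - p) * s ^ (i - p - 1)))) (at s)"
      by (auto intro!: derivative_eq_intros sum.cong simp: mult_ac)
    moreover have "(\<Sum>i=p..d. ?c i * (of_nat (i - p) * s ^ (i - p - 1)))
        = (\<Sum>i=Suc p..d. a i * (fact i / fact (i - Suc p)) * s ^ (i - Suc p))"
    proof (rule sum.mono_neutral_cong_right)
      fix i assume "i \<in> {Suc p..d}"
      then have "i - p = Suc (i - Suc p)" by auto
      then show "?c i * (of_nat (i - p) * s ^ (i - p - 1))
          = a i * (fact i / fact (i - Suc p)) * s ^ (i - Suc p)"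
        by (simp del: of_nat_Suc)
    qed auto
    ultimately show "(deriv ^^ Suc p) (gpoly d a) s
        = (\<Sum>i=Suc p..d. a i * (fact i / fact (i - Suc p)) * s ^ (i - Suc p))"
      by (simp add: Suc DERIV_imp_deriv)
  qed
qed

definition gpoly_bound :: "nat \<Rightarrow> real \<Rightarrow> real" where
  "gpoly_bound d R = fact d * max 1 R ^ d"

lemma one_le_gpoly_bound: "1 \<le> gpoly_bound d R"
  by (simp add: gpoly_bound_def mult_ge1_I)

lemma abs_higher_deriv_gpoly_minus_coeff_le:
  fixes s R :: real
  assumes "\<bar>s\<bar> \<le> R" and "k \<le> d"
  shows "\<bar>(deriv ^^ k) (gpoly d a) s - fact k * a k\<bar>
           \<le> (\<Sum>j=Suc k..d. \<bar>a j\<bar>) * gpoly_bound d R"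
proof -
  let ?t = "\<lambda>i. a i * (fact i / fact (i - k)) * s ^ (i - k)"
  have "(deriv ^^ k) (gpoly d a) s = fact k * a k + (\<Sum>i=Suc k..d. ?t i)"
    using \<open>k \<le> d\<close> by (simp add: higher_deriv_gpoly sum.atLeast_Suc_atMost)
  then have "\<bar>(deriv ^^ k) (gpoly d a) s - fact k * a k\<bar> \<le> (\<Sum>i=Suc k..d. \<bar>?t i\<bar>)"
    by (simp only: add_diff_cancel_left' sum_abs)
  also have "\<dots> \<le> (\<Sum>j=Suc k..d. \<bar>a j\<bar> * (fact d * max 1 R ^ d))"
  proof (rule sum_mono)
    fix i assume "i \<in> {Suc k..d}"
    then have "i \<le> d" by simp
    have "fact i / fact (i - k) \<le> (fact i :: real)"
      by (simp add: divide_le_eq fact_ge_1 mult_le_cancel_left1)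
    also have "\<dots> \<le> fact d"
      using \<open>i \<le> d\<close> by (simp add: fact_mono)
    finally have fact_le: "fact i / fact (i - k) \<le> (fact d :: real)" .
    have "\<bar>s\<bar> ^ (i - k) \<le> max 1 R ^ (i - k)"
      using assms(1) by (intro power_mono) auto
    also have "\<dots> \<le> max 1 R ^ d"
      using \<open>i \<le> d\<close> by (intro power_increasing) auto
    finally have pow_le: "\<bar>s\<bar> ^ (i - k) \<le> max 1 R ^ d" .
    have "\<bar>?t i\<bar> = \<bar>a i\<bar> * (fact i / fact (i - k) * \<bar>s\<bar> ^ (i - k))"
      by (simp add: abs_mult power_abs)
    also have "\<dots> \<le> \<bar>a i\<bar> * (fact d * max 1 R ^ d)"
      using fact_le pow_le by (intro mult_left_mono mult_mono) auto
    finally show "\<bar>?t i\<bar> \<le> \<bar>a i\<bar> * (fact d * max 1 R ^ d)" .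
  qed
  finally show ?thesis
    by (simp add: gpoly_bound_def sum_distrib_right)
qed

lemma ex_last_index_or_zero:
  "\<exists>k\<le>d. (0 < k \<longrightarrow> P k) \<and> (\<forall>j\<in>{Suc k..d}. \<not> P j)"
proof (induction d)
  case (Suc d)
  show ?case
  proof (cases "P (Suc d)")
    case True
    then show ?thesis by auto
  next
    case False
    from Suc.IH obtain k where "k \<le> d" "0 < k \<longrightarrow> P k" "\<forall>j\<in>{Suc k..d}. \<not> P j"
      by blast
    with False show ?thesis
      by (intro exI[of _ k]) (auto simp: le_Suc_eq)
  qed
qed simp

lemma sum_abs_tail_le_geometric:
  fixes a :: "nat \<Rightarrow> real" and m \<delta> :: real
  assumes "0 \<le> m" and "0 \<le> \<delta>" and "\<delta> \<le> 1"
    and "\<And>j. j \<in> {Suc k..d} \<Longrightarrow> \<bar>a j\<bar> \<le> m * \<delta> ^ j"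
  shows "(\<Sum>j=Suc k..d. \<bar>a j\<bar>) \<le> real d * m * \<delta> ^ Suc k"
proof -
  have "(\<Sum>j=Suc k..d. \<bar>a j\<bar>) \<le> (\<Sum>j=Suc k..d. m * \<delta> ^ Suc k)"
  proof (rule sum_mono)
    fix j assume j: "j \<in> {Suc k..d}"
    have "\<delta> ^ j \<le> \<delta> ^ Suc k"
      using j assms(2,3) by (intro power_decreasing) auto
    then show "\<bar>a j\<bar> \<le> m * \<delta> ^ Suc k"
      using assms(1) assms(4)[OF j] by (meson mult_left_mono order_trans)
  qed
  also have "\<dots> = real (d - k) * (m * \<delta> ^ Suc k)"
    by simp
  also have "\<dots> \<le> real d * m * \<delta> ^ Suc k"
    using assms(1,2) by (simp add: mult.assoc mult_right_mono)
  finally show ?thesis .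
qed

lemma abs_higher_deriv_gpoly_minus_coeff_le_geometric:
  fixes a :: "nat \<Rightarrow> real" and m \<delta> R s :: real
  assumes "0 \<le> m" and "0 \<le> \<delta>" and "\<delta> \<le> 1" and "real d * \<delta> * gpoly_bound d R \<le> 1/4"
    and "\<bar>s\<bar> \<le> R" and "k \<le> d"
    and "\<And>j. j \<in> {Suc k..d} \<Longrightarrow> \<bar>a j\<bar> \<le> m * \<delta> ^ j"
  shows "\<bar>(deriv ^^ k) (gpoly d a) s - fact k * a k\<bar> \<le> m * \<delta> ^ k / 4"
proof -
  have "\<bar>(deriv ^^ k) (gpoly d a) s - fact k * a k\<bar> \<le> (\<Sum>j=Suc k..d. \<bar>a j\<bar>) * gpoly_bound d R"
    using assms(5,6) by (rule abs_higher_deriv_gpoly_minus_coeff_le)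
  also have "\<dots> \<le> real d * m * \<delta> ^ Suc k * gpoly_bound d R"
    using assms(1-3,7) one_le_gpoly_bound[of d R]
    by (intro mult_right_mono sum_abs_tail_le_geometric) auto
  also have "\<dots> = m * \<delta> ^ k * (real d * \<delta> * gpoly_bound d R)"
    by simp
  also have "\<dots> \<le> m * \<delta> ^ k * (1/4)"
    using assms(1,2,4) by (intro mult_left_mono) auto
  finally show ?thesis by simp
qed

lemma abs_higher_deriv_gpoly_ge:
  fixes a :: "nat \<Rightarrow> real" and m \<delta> R s :: real
  assumes "0 \<le> m" and "0 \<le> \<delta>" and "\<delta> \<le> 1" and "real d * \<delta> * gpoly_bound d R \<le> 1/4"
    and "\<bar>s\<bar> \<le> R" and "k \<le> d" and "m * \<delta> ^ k \<le> \<bar>a k\<bar>"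
    and "\<And>j. j \<in> {Suc k..d} \<Longrightarrow> \<bar>a j\<bar> \<le> m * \<delta> ^ j"
  shows "3/4 * (m * \<delta> ^ k) \<le> \<bar>(deriv ^^ k) (gpoly d a) s\<bar>"
proof -
  have "\<bar>a k\<bar> \<le> fact k * \<bar>a k\<bar>"
    by (simp add: fact_ge_1 mult_le_cancel_right1)
  moreover have "\<bar>(deriv ^^ k) (gpoly d a) s - fact k * a k\<bar> \<le> m * \<delta> ^ k / 4"
    using assms(1-6,8) by (rule abs_higher_deriv_gpoly_minus_coeff_le_geometric)
  moreover have "\<bar>fact k * a k\<bar> = fact k * \<bar>a k\<bar>"
    by (simp add: abs_mult)
  ultimately show ?thesis
    using assms(7) abs_triangle_ineq2_sym[of "fact k * a k" "(deriv ^^ k) (gpoly d a) s"]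
    by linarith
qed

lemma constant_coeff_dominates_gpoly:
  fixes a :: "nat \<Rightarrow> real" and m \<delta> R :: real
  assumes "0 \<le> m" and "0 \<le> \<delta>" and "\<delta> \<le> 1" and "real d * \<delta> * gpoly_bound d R \<le> 1/4"
    and "0 \<le> R" and "m \<le> (\<Sum>i\<le>d. \<bar>a i\<bar>)"
    and "\<And>j. j \<in> {1..d} \<Longrightarrow> \<bar>a j\<bar> \<le> m * \<delta> ^ j"
  shows "m / 2 \<le> \<bar>a 0\<bar> - (SUP s\<in>{-R..R}. \<bar>gpoly d a s - a 0\<bar>)"
proof -
  have "\<bar>gpoly d a s - a 0\<bar> \<le> m / 4" if "s \<in> {-R..R}" for s
    using abs_higher_deriv_gpoly_minus_coeff_le_geometric[OF assms(1-4), of s 0 a] assms(7) that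
    by (simp add: abs_le_iff)
  then have sup_le: "(SUP s\<in>{-R..R}. \<bar>gpoly d a s - a 0\<bar>) \<le> m / 4"
    using assms(5) by (intro cSUP_least) auto
  have "real d * \<delta> \<le> real d * \<delta> * gpoly_bound d R"
    using mult_left_mono[OF one_le_gpoly_bound, of "real d * \<delta>" d R] assms(2) by simp
  then have "real d * m * \<delta> \<le> m / 4"
    using assms(1,4) mult_left_mono[of "real d * \<delta>" "1/4" m] by (simp add: mult_ac)
  moreover have "(\<Sum>j=1..d. \<bar>a j\<bar>) \<le> real d * m * \<delta>"
    using sum_abs_tail_le_geometric[of m \<delta> 0 d a] assms(1-3,7) by simp
  ultimately have "(\<Sum>j=1..d. \<bar>a j\<bar>) \<le> m / 4"
    by linarith
  moreover have "(\<Sum>i\<le>d. \<bar>a i\<bar>) = \<bar>a 0\<bar> + (\<Sum>j=1..d. \<bar>a j\<bar>)"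
    by (simp add: sum.atLeast_Suc_atMost flip: atLeast0AtMost)
  ultimately show ?thesis
    using assms(6) sup_le by linarith
qed

lemma ex_ratio_gpoly_bound: "\<exists>\<delta>>0. \<delta> \<le> 1 \<and> real d * \<delta> * gpoly_bound d R \<le> 1/4"
proof (intro exI conjI)
  let ?\<delta> = "1 / (4 * (real d + 1) * gpoly_bound d R)"
  have "1 \<le> 4 * (real d + 1) * gpoly_bound d R"
    using one_le_gpoly_bound by (intro mult_ge1_I) auto
  then show "0 < ?\<delta>" and "?\<delta> \<le> 1"
    by auto
  have "real d * ?\<delta> * gpoly_bound d R = real d / (4 * (real d + 1))"
    using one_le_gpoly_bound[of d R] by simp
  also have "\<dots> \<le> 1/4"
    by (simp add: field_simps)
  finally show "real d * ?\<delta> * gpoly_bound d R \<le> 1/4" .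
qed

lemma gpoly_large_derivative_or_constant_coeff:
  fixes a :: "nat \<Rightarrow> real" and m \<delta> R :: real
  assumes "0 < m" and "0 < \<delta>" and "\<delta> \<le> 1" and "real d * \<delta> * gpoly_bound d R \<le> 1/4"
    and "0 \<le> R" and "m \<le> (\<Sum>i\<le>d. \<bar>a i\<bar>)"
  shows "(\<exists>p\<in>{1..d}. \<forall>s\<in>{-R..R}. m * \<delta> ^ d / 2 \<le> \<bar>(deriv ^^ p) (gpoly d a) s\<bar>)
         \<or> m * \<delta> ^ d / 2 \<le> \<bar>a 0\<bar> - (SUP s\<in>{-R..R}. \<bar>gpoly d a s - a 0\<bar>)"
proof -
  obtain k where "k \<le> d" and large: "0 < k \<longrightarrow> m * \<delta> ^ k \<le> \<bar>a k\<bar>"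
    and not_large: "\<forall>j\<in>{Suc k..d}. \<not> m * \<delta> ^ j \<le> \<bar>a j\<bar>"
    using ex_last_index_or_zero[of d "\<lambda>k. m * \<delta> ^ k \<le> \<bar>a k\<bar>"] by blast
  have small: "\<bar>a j\<bar> \<le> m * \<delta> ^ j" if "j \<in> {Suc k..d}" for j
    using bspec[OF not_large that] by simp
  show ?thesis
  proof (cases "k = 0")
    case False
    have "m * \<delta> ^ d \<le> m * \<delta> ^ k"
      using assms(1-3) \<open>k \<le> d\<close> by (intro mult_left_mono power_decreasing) auto
    moreover have "0 \<le> m * \<delta> ^ d"
      using assms(1,2) by simp
    moreover have "3/4 * (m * \<delta> ^ k) \<le> \<bar>(deriv ^^ k) (gpoly d a) s\<bar>" if "s \<in> {-R..R}" for s
      using assms(1-4) \<open>k \<le> d\<close> False large small that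
      by (intro abs_higher_deriv_gpoly_ge) (auto simp: abs_le_iff)
    ultimately have "\<forall>s\<in>{-R..R}. m * \<delta> ^ d / 2 \<le> \<bar>(deriv ^^ k) (gpoly d a) s\<bar>"
      by force
    with False \<open>k \<le> d\<close> show ?thesis
      by auto
  next
    case True
    have "m * \<delta> ^ d \<le> m"
      using assms(1-3) by (simp add: power_le_one mult_left_le)
    moreover have "m / 2 \<le> \<bar>a 0\<bar> - (SUP s\<in>{-R..R}. \<bar>gpoly d a s - a 0\<bar>)"
      using assms small True by (intro constant_coeff_dominates_gpoly) auto
    ultimately show ?thesis
      by auto
  qed
qed

theorem lemma2:
  fixes d :: nat and m R :: real
  assumes "m > 0" and "R > 0"
  shows "\<exists>lam>0. \<forall>a :: nat \<Rightarrow> real. (\<Sum>i\<le>d. \<bar>a i\<bar>) \<ge> m \<longrightarrow>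
           ((\<exists>p\<in>{1..d}. \<forall>s\<in>{-R..R}. \<bar>(deriv ^^ p) (gpoly d a) s\<bar> \<ge> lam)
            \<or> \<bar>a 0\<bar> - (SUP s\<in>{-R..R}. \<bar>gpoly d a s - a 0\<bar>) \<ge> lam)"
proof -
  obtain \<delta> where "0 < \<delta>" "\<delta> \<le> 1" "real d * \<delta> * gpoly_bound d R \<le> 1/4"
    using ex_ratio_gpoly_bound by blast
  then show ?thesis
    using assms gpoly_large_derivative_or_constant_coeff[of m \<delta> d R]
    by (intro exI[of _ "m * \<delta> ^ d / 2"]) auto
qed

end
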